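(* Let $F$ be a face of $V^c_O$ and let $\lambda\ne\mu$ be elements of $\Upsilon_1$ with $F\subseteq K_\lambda\cap K_\mu$. Then $\mathrm{supp}(\lambda)$ and $\mathrm{supp}(\mu)$ are consistent in their orientations: there is no oriented edge $e$ with $e\in\mathrm{supp}(\lambda)$ and $\bar e\in\mathrm{supp}(\mu)$.
   Context: $G=(V,E)$ is a finite connected graph; each edge gives oriented edges $e,\bar e$. Real $1$-cochains are $x$ on oriented edges with $x_{\bar e}=-x_e$, $\langle x,y\rangle=\sum_{e\in E}x_ey_e$, $q(x)=\langle x,x\rangle$. For $f:V\to\mathbb R$, $d(f)(e)=f(\text{head}(e))-f(\text{tail}(e))$; $K=d(\mathbb R^V)$ and $L=d(\mathbb Z^V)$. $V^c_O=\{x\in K: q(x)\le q(x-\mu)\ \forall\mu\in L\}$. $\mathrm{supp}(x)=\{e: x_e>0\}$. $\chi_C$ is the characteristic function of $C$; if $G[C]$ has $k$ and $G[V\setminus C]$ has $r$ connected components, $\kappa(C,V\setminus C)=k+r-1$, and $\Upsilon_1=\{d(\chi_C): \kappa(C,V\setminus C)=1\}$. For $\lambda\in\Upsilon_1$, $K_\lambda=\{x\in K: 2\langle x,\lambda\rangle=q(\lambda)\}$. *)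

theory Defs
  imports "HOL-Analysis.Analysis"
begin

text \<open>A finite graph (multigraph; loops and parallel edges allowed) with vertex type 'v
and edge type 'e; each edge e carries a reference orientation tlf e \<rightarrow> hdf e.
Real 1-cochains are determined by their values on reference orientations, so they
are vectors in real^'e; the value on the reversed edge is the negative.\<close>

type_synonym 'e cochain = "real ^ 'e"

text \<open>Oriented edges: (e, True) is the reference orientation of e, (e, False) its reverse.\<close>
definition oval :: "'e::finite cochain \<Rightarrow> 'e \<times> bool \<Rightarrow> real" where
  "oval x oe = (if snd oe then x $ fst oe else - (x $ fst oe))"

definition orev :: "'e \<times> bool \<Rightarrow> 'e \<times> bool" where
  "orev oe = (fst oe, \<not> snd oe)"

definition supp :: "'e::finite cochain \<Rightarrow> ('e \<times> bool) set" where
  "supp x = {oe. oval x oe > 0}"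

definition cpair :: "'e::finite cochain \<Rightarrow> 'e cochain \<Rightarrow> real" where
  "cpair x y = (\<Sum>e\<in>UNIV. x $ e * y $ e)"

definition qf :: "'e::finite cochain \<Rightarrow> real" where
  "qf x = cpair x x"

definition cobd :: "('e::finite \<Rightarrow> 'v) \<Rightarrow> ('e \<Rightarrow> 'v) \<Rightarrow> ('v \<Rightarrow> real) \<Rightarrow> 'e cochain" where
  "cobd tlf hdf f = (\<chi> e. f (hdf e) - f (tlf e))"

definition Kspace :: "('e::finite \<Rightarrow> 'v) \<Rightarrow> ('e \<Rightarrow> 'v) \<Rightarrow> 'e cochain set" where
  "Kspace tlf hdf = range (cobd tlf hdf)"

definition Lattice :: "('e::finite \<Rightarrow> 'v) \<Rightarrow> ('e \<Rightarrow> 'v) \<Rightarrow> 'e cochain set" where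
  "Lattice tlf hdf = {cobd tlf hdf f | f. \<forall>v. f v \<in> \<int>}"

definition VoronoiO :: "('e::finite \<Rightarrow> 'v) \<Rightarrow> ('e \<Rightarrow> 'v) \<Rightarrow> 'e cochain set" where
  "VoronoiO tlf hdf = {x \<in> Kspace tlf hdf. \<forall>mu\<in>Lattice tlf hdf. qf x \<le> qf (x - mu)}"

definition adj_in :: "('e::finite \<Rightarrow> 'v) \<Rightarrow> ('e \<Rightarrow> 'v) \<Rightarrow> 'v set \<Rightarrow> ('v \<times> 'v) set" where
  "adj_in tlf hdf C = {(tlf e, hdf e) | e. tlf e \<in> C \<and> hdf e \<in> C}
                  \<union> {(hdf e, tlf e) | e. tlf e \<in> C \<and> hdf e \<in> C}"

definition conn_rel :: "('e::finite \<Rightarrow> 'v) \<Rightarrow> ('e \<Rightarrow> 'v) \<Rightarrow> 'v set \<Rightarrow> ('v \<times> 'v) set" where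
  "conn_rel tlf hdf C = {(u, v). u \<in> C \<and> v \<in> C \<and> (u, v) \<in> (adj_in tlf hdf C)\<^sup>*}"

definition num_comp :: "('e::finite \<Rightarrow> 'v) \<Rightarrow> ('e \<Rightarrow> 'v) \<Rightarrow> 'v set \<Rightarrow> nat" where
  "num_comp tlf hdf C = card (C // conn_rel tlf hdf C)"

definition graph_connected :: "('e::finite \<Rightarrow> 'v) \<Rightarrow> ('e \<Rightarrow> 'v) \<Rightarrow> bool" where
  "graph_connected tlf hdf \<longleftrightarrow> (\<forall>u v. (u, v) \<in> (adj_in tlf hdf UNIV)\<^sup>*)"

definition kappa :: "('e::finite \<Rightarrow> 'v) \<Rightarrow> ('e \<Rightarrow> 'v) \<Rightarrow> 'v set \<Rightarrow> int" where
  "kappa tlf hdf C = int (num_comp tlf hdf C) + int (num_comp tlf hdf (UNIV - C)) - 1"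

definition Upsilon1 :: "('e::finite \<Rightarrow> 'v) \<Rightarrow> ('e \<Rightarrow> 'v) \<Rightarrow> 'e cochain set" where
  "Upsilon1 tlf hdf = {cobd tlf hdf (indicator C) | C. kappa tlf hdf C = 1}"

definition Khyp :: "('e::finite \<Rightarrow> 'v) \<Rightarrow> ('e \<Rightarrow> 'v) \<Rightarrow> 'e cochain \<Rightarrow> 'e cochain set" where
  "Khyp tlf hdf lam = {x \<in> Kspace tlf hdf. 2 * cpair x lam = qf lam}"

end

theory Submission
  imports Defs
begin

(* Write lam = d(chi_C) and mu = d(chi_D) for vertex sets C, D and pick a
   point x of the nonempty face F; x lies in the Voronoi cell and on both hyperplanes
   2<x,lam> = q(lam), 2<x,mu> = q(mu).  The cuts of C \<union> D and C \<inter> D are lattice vectors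
   with d(chi_(C\<union>D)) + d(chi_(C\<inter>D)) = lam + mu, so the Voronoi inequalities
   2<x,nu> \<le> q(nu) for these two cuts give q(lam) + q(mu) \<le> q(d chi_(C\<union>D)) + q(d chi_(C\<inter>D)).
   On the other hand the cut function is submodular edge by edge, strictly so on an edge
   whose orientations lam and mu disagree; such an edge would make the reverse
   inequality strict, a contradiction. *)

lemma cpair_add_right: "cpair x (a + b) = cpair x a + cpair x b"
  by (simp add: cpair_def distrib_left sum.distrib)

lemma qf_diff: "qf (x - m) = qf x - 2 * cpair x m + qf m"
  by (simp add: qf_def cpair_def algebra_simps sum_subtractf sum.distrib sum_distrib_left)

lemma cobd_add: "cobd tlf hdf (\<lambda>v. f v + g v) = cobd tlf hdf f + cobd tlf hdf g"
  by (simp add: cobd_def vec_eq_iff)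

lemma indicator_Un_plus_Int:
  "(\<lambda>v. indicator (C \<union> D) v + indicator (C \<inter> D) v :: real)
   = (\<lambda>v. indicator C v + indicator D v)"
  by (auto simp: indicator_def)

lemma cut_Un_plus_cut_Int:
  "cobd tlf hdf (indicator (C \<union> D)) + cobd tlf hdf (indicator (C \<inter> D))
   = cobd tlf hdf (indicator C) + cobd tlf hdf (indicator D :: 'v \<Rightarrow> real)"
  by (simp only: cobd_add[symmetric] indicator_Un_plus_Int)

lemma cut_in_Lattice: "cobd tlf hdf (indicator C :: 'v \<Rightarrow> real) \<in> Lattice tlf hdf"
  unfolding Lattice_def by (auto simp: indicator_def)

lemma VoronoiO_lattice_ineq:
  assumes "x \<in> VoronoiO tlf hdf" and "m \<in> Lattice tlf hdf"
  shows "2 * cpair x m \<le> qf m"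
proof -
  have "qf x \<le> qf (x - m)" using assms by (auto simp: VoronoiO_def)
  then show ?thesis by (simp add: qf_diff)
qed

lemma cut_submodular_edge:
  fixes tlf hdf :: "'e::finite \<Rightarrow> 'v" and C D :: "'v set"
  defines "lam \<equiv> cobd tlf hdf (indicator C :: 'v \<Rightarrow> real)"
    and "mu \<equiv> cobd tlf hdf (indicator D :: 'v \<Rightarrow> real)"
    and "a \<equiv> cobd tlf hdf (indicator (C \<union> D) :: 'v \<Rightarrow> real)"
    and "b \<equiv> cobd tlf hdf (indicator (C \<inter> D) :: 'v \<Rightarrow> real)"
  shows "(a $ e)\<^sup>2 + (b $ e)\<^sup>2 \<le> (lam $ e)\<^sup>2 + (mu $ e)\<^sup>2"
    and "lam $ e * mu $ e < 0 \<Longrightarrow> (a $ e)\<^sup>2 + (b $ e)\<^sup>2 < (lam $ e)\<^sup>2 + (mu $ e)\<^sup>2"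
  unfolding assms cobd_def
  by (cases "tlf e \<in> C"; cases "hdf e \<in> C"; cases "tlf e \<in> D"; cases "hdf e \<in> D";
      simp add: indicator_def)+

lemma cut_submodular_strict:
  fixes tlf hdf :: "'e::finite \<Rightarrow> 'v" and C D :: "'v set"
  defines "lam \<equiv> cobd tlf hdf (indicator C :: 'v \<Rightarrow> real)"
    and "mu \<equiv> cobd tlf hdf (indicator D :: 'v \<Rightarrow> real)"
  assumes "lam $ e * mu $ e < 0"
  shows "qf (cobd tlf hdf (indicator (C \<union> D))) + qf (cobd tlf hdf (indicator (C \<inter> D)))
         < qf lam + qf mu"
proof -
  let ?a = "cobd tlf hdf (indicator (C \<union> D) :: 'v \<Rightarrow> real)"
  let ?b = "cobd tlf hdf (indicator (C \<inter> D) :: 'v \<Rightarrow> real)"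
  have "(\<Sum>e\<in>UNIV. (?a $ e)\<^sup>2 + (?b $ e)\<^sup>2) < (\<Sum>e\<in>UNIV. (lam $ e)\<^sup>2 + (mu $ e)\<^sup>2)"
    using cut_submodular_edge[where tlf=tlf and hdf=hdf and C=C and D=D] assms
    by (intro sum_strict_mono_ex1) auto
  then show ?thesis
    by (simp add: qf_def cpair_def sum.distrib power2_eq_square)
qed

lemma opposite_supports_sign:
  assumes "oe \<in> supp lam" and "orev oe \<in> supp mu"
  shows "lam $ fst oe * mu $ fst oe < 0"
  using assms by (cases "snd oe") (auto simp: supp_def oval_def orev_def mult_pos_neg mult_neg_pos)

theorem tight_cuts_consistently_oriented:
  fixes tlf hdf :: "'e::finite \<Rightarrow> 'v" and C D :: "'v set"
  defines "lam \<equiv> cobd tlf hdf (indicator C :: 'v \<Rightarrow> real)"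
    and "mu \<equiv> cobd tlf hdf (indicator D :: 'v \<Rightarrow> real)"
  assumes x: "x \<in> VoronoiO tlf hdf"
    and tight: "2 * cpair x lam = qf lam" "2 * cpair x mu = qf mu"
  shows "\<not> (\<exists>oe. oe \<in> supp lam \<and> orev oe \<in> supp mu)"
proof
  assume "\<exists>oe. oe \<in> supp lam \<and> orev oe \<in> supp mu"
  then obtain oe where "oe \<in> supp lam" "orev oe \<in> supp mu" by blast
  then have opposite: "lam $ fst oe * mu $ fst oe < 0" by (rule opposite_supports_sign)
  let ?a = "cobd tlf hdf (indicator (C \<union> D) :: 'v \<Rightarrow> real)"
  let ?b = "cobd tlf hdf (indicator (C \<inter> D) :: 'v \<Rightarrow> real)"
  have "qf lam + qf mu = 2 * cpair x (?a + ?b)"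
    using tight by (simp add: cut_Un_plus_cut_Int cpair_add_right lam_def mu_def)
  also have "\<dots> \<le> qf ?a + qf ?b"
    using VoronoiO_lattice_ineq[OF x cut_in_Lattice, of "C \<union> D"]
          VoronoiO_lattice_ineq[OF x cut_in_Lattice, of "C \<inter> D"]
    by (simp add: cpair_add_right)
  also have "\<dots> < qf lam + qf mu"
    using opposite unfolding lam_def mu_def by (rule cut_submodular_strict)
  finally show False by simp
qed

theorem mainTheorem17:
  fixes tlf hdf :: "'e::finite \<Rightarrow> 'v::finite"
    and F :: "'e cochain set"
    and lam mu :: "'e cochain"
  assumes "graph_connected tlf hdf"
    and "F face_of VoronoiO tlf hdf"
    and "F \<noteq> {}"
    and "lam \<in> Upsilon1 tlf hdf" and "mu \<in> Upsilon1 tlf hdf" and "lam \<noteq> mu"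
    and "F \<subseteq> Khyp tlf hdf lam \<inter> Khyp tlf hdf mu"
  shows "\<not> (\<exists>oe. oe \<in> supp lam \<and> orev oe \<in> supp mu)"
proof -
  obtain x where xF: "x \<in> F" using assms(3) by blast
  then have xV: "x \<in> VoronoiO tlf hdf" using assms(2) face_of_imp_subset by blast
  have tight: "2 * cpair x lam = qf lam" "2 * cpair x mu = qf mu"
    using xF assms(7) by (auto simp: Khyp_def)
  obtain C where "lam = cobd tlf hdf (indicator C)" using assms(4) by (auto simp: Upsilon1_def)
  moreover obtain D where "mu = cobd tlf hdf (indicator D)" using assms(5) by (auto simp: Upsilon1_def)
  ultimately show ?thesis
    using tight_cuts_consistently_oriented[OF xV] tight by blast
qed

end
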